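(* Let $F$ be a $C^2$ Finsler metric on $\mathbb{R}^2$ that is projective and periodic, i.e. $F(\mathbf{x}+\mathbf{m},\mathbf{v})=F(\mathbf{x},\mathbf{v})$ for all $\mathbf{m}\in\mathbb{Z}^2$. Then $F$ is the sum of a Minkowski norm and the differential of a $C^3$ function on the plane: there exist a Minkowski norm $\|\cdot\|$ on $\mathbb{R}^2$ and a $C^3$ function $f:\mathbb{R}^2\to\mathbb{R}$ with $F(\mathbf{x},\mathbf{v})=\|\mathbf{v}\|+df_{\mathbf{x}}(\mathbf{v})$.
   Context: A Minkowski norm on a finite-dimensional real vector space is a function $\|\cdot\|\ge 0$, $C^2$ outside the origin, vanishing only at $\mathbf{0}$, positively homogeneous of degree one, satisfying the triangle inequality, and such that the Hessian of $\mathbf{x}\mapsto\|\mathbf{x}\|^2$ is positive definite outside the origin. A $C^2$ Finsler metric on $\mathbb{R}^2$ is a continuous $F:T\mathbb{R}^2\to[0,\infty)$, $C^2$ outside the zero section, restricting to a Minkowski norm on each tangent space (not necessarily reversible). It is projective if the parametrized lines $t\mapsto\mathbf{x}+t\mathbf{v}$ solve its Euler–Lagrange equations. *)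

theory Defs
  imports "HOL-Analysis.Analysis"
begin

fun Ck :: "nat \<Rightarrow> 'a::euclidean_space set \<Rightarrow> ('a \<Rightarrow> real) \<Rightarrow> bool" where
  "Ck 0 S f = continuous_on S f"
| "Ck (Suc k) S f = (f differentiable_on S \<and>
      (\<forall>b\<in>Basis. Ck k S (\<lambda>x. frechet_derivative f (at x) b)))"

definition hess_form :: "('a::euclidean_space \<Rightarrow> real) \<Rightarrow> 'a \<Rightarrow> 'a \<Rightarrow> real" where
  "hess_form g x u = frechet_derivative (\<lambda>y. frechet_derivative g (at y) u) (at x) u"

definition minkowski_norm :: "(real^2 \<Rightarrow> real) \<Rightarrow> bool" where
  "minkowski_norm N \<longleftrightarrow>
     (\<forall>v. N v \<ge> 0) \<and>
     Ck 2 (- {0}) N \<and>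
     (\<forall>v. N v = 0 \<longleftrightarrow> v = 0) \<and>
     (\<forall>t v. t > 0 \<longrightarrow> N (t *\<^sub>R v) = t * N v) \<and>
     (\<forall>v w. N (v + w) \<le> N v + N w) \<and>
     (\<forall>v. v \<noteq> 0 \<longrightarrow> (\<forall>u. u \<noteq> 0 \<longrightarrow> hess_form (\<lambda>y. (N y)\<^sup>2) v u > 0))"

definition finsler_C2 :: "(real^2 \<Rightarrow> real^2 \<Rightarrow> real) \<Rightarrow> bool" where
  "finsler_C2 F \<longleftrightarrow>
     continuous_on UNIV (\<lambda>p. F (fst p) (snd p)) \<and>
     (\<forall>x v. F x v \<ge> 0) \<and>
     Ck 2 {p. snd p \<noteq> 0} (\<lambda>p. F (fst p) (snd p)) \<and>
     (\<forall>x. minkowski_norm (F x))"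

text \<open>Projective: the lines s \<mapsto> x + s v (v \<noteq> 0) solve the Euler--Lagrange equations
  d/ds (\<partial>F/\<partial>v (\<gamma>(s), \<gamma>'(s))) = \<partial>F/\<partial>x (\<gamma>(s), \<gamma>'(s)).\<close>
definition projective :: "(real^2 \<Rightarrow> real^2 \<Rightarrow> real) \<Rightarrow> bool" where
  "projective F \<longleftrightarrow>
     (\<forall>x v t b. v \<noteq> 0 \<longrightarrow>
        ((\<lambda>s. frechet_derivative (\<lambda>w. F (x + s *\<^sub>R v) w) (at v) b)
           has_real_derivative
         frechet_derivative (\<lambda>y. F y v) (at (x + t *\<^sub>R v)) b) (at t))"

definition periodic :: "(real^2 \<Rightarrow> real^2 \<Rightarrow> real) \<Rightarrow> bool" where
  "periodic F \<longleftrightarrow>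
     (\<forall>m x v. (\<forall>i. m $ i \<in> \<int>) \<longrightarrow> F (x + m) v = F x v)"

end

theory Submission
  imports Defs
begin

text \<open>
  For a projective metric the segments are extremals, so the first variation of the length
  L(p, q) (seg_length) of the segment from p to q consists of boundary terms only:
  dL = F_v(q, q - p) dq - F_v(p, q - p) dp.  Comparing the two mixed second derivatives of L and
  using the homogeneity of F_v shows that the vertical Hessian F_vv(x, w) is invariant under
  x \<mapsto> x + c w.  By Z^2-periodicity and Kronecker's theorem, F_vv(x, w) is then independent
  of x for w of irrational slope, hence by continuity for all w \<noteq> 0.  So F_v(x, v) - F_v(y, v)
  does not depend on v, and by Euler's identity F(x, v) = F_v(x, v) v the difference
  F(x, \<cdot>) - F(0, \<cdot>) is linear; it is the differential of q \<mapsto> L(p, q) - F(0, q - p).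
\<close>

section \<open>Frechet derivatives and functions of class C^k\<close>

lemma frechet_derivative_cong_open:
  assumes "open S" "z \<in> S" "\<And>y. y \<in> S \<Longrightarrow> f y = g y"
  shows "frechet_derivative f (at z) = frechet_derivative g (at z)"
proof -
  have "(f has_derivative D) (at z) \<longleftrightarrow> (g has_derivative D) (at z)" for D
    using has_derivative_transform_within_open[OF _ assms(1,2)] assms(3) by metis
  then show ?thesis unfolding frechet_derivative_def by simp
qed

lemma frechet_derivative_periodic:
  assumes "\<And>z. f (z + a) = f z"
  shows "frechet_derivative f (at (z + a)) = frechet_derivative f (at z)"
proof -
  have shift: "((\<lambda>y. y + c) has_derivative id) (at x)" for c x :: 'a
    by (auto intro!: derivative_eq_intros simp: id_def)
  have "f = (\<lambda>y. f (y + a))" "f = (\<lambda>y. f (y - a))"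
    using assms[of "_ - a"] by (auto simp: assms)
  then have "(f has_derivative D) (at (z + a)) \<longleftrightarrow> (f has_derivative D) (at z)" for D
    using has_derivative_compose[OF shift[of a z], of f D]
      has_derivative_compose[OF shift[of "- a" "z + a"], of f D] by auto
  then show ?thesis unfolding frechet_derivative_def by simp
qed

lemma Ck_imp_continuous_on: "Ck k S f \<Longrightarrow> continuous_on S f"
  by (cases k) (auto intro: differentiable_imp_continuous_on)

lemma Ck_Suc_has_derivative:
  assumes "Ck (Suc k) S f" "open S" "x \<in> S"
  shows "(f has_derivative frechet_derivative f (at x)) (at x)"
  using assms frechet_derivative_works differentiable_on_eq_differentiable_at by (metis Ck.simps(2))

lemma Ck_cong_open:
  assumes "open S" "\<And>x. x \<in> S \<Longrightarrow> f x = g x" "Ck k S f"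
  shows "Ck k S g"
  using assms(2,3)
proof (induction k arbitrary: f g)
  case 0
  then show ?case using continuous_on_cong by fastforce
next
  case (Suc k)
  have "g differentiable at x" if "x \<in> S" for x
    using has_derivative_transform_within_open[OF
        Ck_Suc_has_derivative[OF Suc.prems(2) assms(1) that] assms(1) that]
      Suc.prems(1) differentiable_def by blast
  then have "g differentiable_on S"
    using assms(1) differentiable_on_eq_differentiable_at by blast
  moreover have "Ck k S (\<lambda>x. frechet_derivative g (at x) b)" if "b \<in> Basis" for b
  proof (rule Suc.IH)
    show "Ck k S (\<lambda>x. frechet_derivative f (at x) b)" using Suc.prems(2) that by simp
    show "frechet_derivative f (at x) b = frechet_derivative g (at x) b" if "x \<in> S" for x
      using frechet_derivative_cong_open[OF assms(1) that Suc.prems(1)] by simp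
  qed
  ultimately show ?case by simp
qed

lemma Ck_SucI:
  assumes "open S" "\<And>x. x \<in> S \<Longrightarrow> (f has_derivative f' x) (at x)"
    and "\<And>b. b \<in> Basis \<Longrightarrow> Ck k S (\<lambda>x. f' x b)"
  shows "Ck (Suc k) S f"
proof -
  have "f differentiable_on S"
    using assms(1,2) differentiable_on_eq_differentiable_at differentiable_def by blast
  moreover have "Ck k S (\<lambda>x. frechet_derivative f (at x) b)" if "b \<in> Basis" for b
    by (rule Ck_cong_open[OF assms(1) _ assms(3)[OF that]])
      (simp add: frechet_derivative_at[OF assms(2)])
  ultimately show ?thesis by simp
qed

lemma Ck_const: "open S \<Longrightarrow> Ck k S (\<lambda>x. c)"
proof (induction k arbitrary: c)
  case (Suc k)
  then show ?case by (intro Ck_SucI[of _ _ "\<lambda>x h. 0"]) auto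
qed simp

lemma Ck_add:
  assumes "open S" "Ck k S f" "Ck k S g"
  shows "Ck k S (\<lambda>x. f x + g x)"
  using assms(2,3)
proof (induction k arbitrary: f g)
  case (Suc k)
  show ?case
  proof (rule Ck_SucI[OF assms(1)])
    fix x assume "x \<in> S"
    then show "((\<lambda>x. f x + g x) has_derivative
        (\<lambda>h. frechet_derivative f (at x) h + frechet_derivative g (at x) h)) (at x)"
      using Suc.prems assms(1) by (intro has_derivative_add Ck_Suc_has_derivative) auto
  qed (use Suc in simp)
qed (auto intro: continuous_intros)

lemma Ck_cmult:
  assumes "open S" "Ck k S f"
  shows "Ck k S (\<lambda>x. c * f x)"
  using assms(2)
proof (induction k arbitrary: f)
  case (Suc k)
  show ?case
  proof (rule Ck_SucI[OF assms(1)])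
    fix x assume "x \<in> S"
    then show "((\<lambda>x. c * f x) has_derivative (\<lambda>h. c * frechet_derivative f (at x) h)) (at x)"
      using Suc.prems assms(1) by (intro has_derivative_mult_right Ck_Suc_has_derivative) auto
  qed (use Suc in simp)
qed (auto intro: continuous_intros)

lemma Ck_sum:
  assumes "open S" "\<And>i. i \<in> I \<Longrightarrow> Ck k S (f i)"
  shows "Ck k S (\<lambda>x. \<Sum>i\<in>I. f i x)"
  using assms(2)
proof (induction I rule: infinite_finite_induct)
  case (insert i I)
  then show ?case by (simp add: Ck_add assms(1))
qed (simp_all add: Ck_const assms(1))

lemma linear_eq_sum_Basis:
  fixes L :: "'a::euclidean_space \<Rightarrow> real"
  assumes "linear L"
  shows "L d = (\<Sum>b\<in>Basis. (d \<bullet> b) * L b)"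
proof -
  have "L d = L (\<Sum>b\<in>Basis. (d \<bullet> b) *\<^sub>R b)" by (simp add: euclidean_representation)
  also have "\<dots> = (\<Sum>b\<in>Basis. (d \<bullet> b) * L b)"
    using assms by (simp add: linear_sum linear_scale)
  finally show ?thesis .
qed

lemma Ck_frechet_derivative:
  assumes "open S" "Ck (Suc k) S f"
  shows "Ck k S (\<lambda>x. frechet_derivative f (at x) d)"
proof (rule Ck_cong_open[OF assms(1)])
  show "Ck k S (\<lambda>x. \<Sum>b\<in>Basis. (d \<bullet> b) * frechet_derivative f (at x) b)"
    using assms by (intro Ck_sum Ck_cmult) auto
  show "(\<Sum>b\<in>Basis. (d \<bullet> b) * frechet_derivative f (at x) b) = frechet_derivative f (at x) d"
    if "x \<in> S" for x
    using Ck_Suc_has_derivative[OF assms(2,1) that] has_derivative_linear linear_eq_sum_Basis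
    by metis
qed

lemma Ck_slice:
  fixes g :: "'a::euclidean_space \<times> 'b::euclidean_space \<Rightarrow> real"
  assumes "open S" "\<And>x. (x, v) \<in> S" "Ck k S g"
  shows "Ck k UNIV (\<lambda>x. g (x, v))"
  using assms(3)
proof (induction k arbitrary: g)
  case 0
  then have "continuous_on S g" by simp
  then have "continuous_on UNIV (\<lambda>x. g (x, v))"
    by (rule continuous_on_compose2) (auto intro: continuous_intros assms(2))
  then show ?case by simp
next
  case (Suc k)
  have "((\<lambda>x. g (x, v)) has_derivative (\<lambda>h. frechet_derivative g (at (x, v)) (h, 0))) (at x)" for x
    using has_derivative_compose[OF has_derivative_Pair[OF has_derivative_ident has_derivative_const]
        Ck_Suc_has_derivative[OF Suc.prems assms(1,2)]] by simp
  moreover have "(b, 0) \<in> (Basis :: ('a \<times> 'b) set)" if "b \<in> Basis" for b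
    using that by (simp add: Basis_prod_def)
  ultimately show ?case
    using Suc by (intro Ck_SucI) auto
qed

section \<open>Equality of mixed partial derivatives\<close>

lemma mixed_partial_integral:
  fixes \<phi> A B B' :: "real \<Rightarrow> real \<Rightarrow> real"
  assumes s: "0 \<le> s" "s < \<delta>"
    and \<phi>_s: "\<And>s t. \<bar>s\<bar> < \<delta> \<Longrightarrow> \<bar>t\<bar> < \<delta> \<Longrightarrow> ((\<lambda>s. \<phi> s t) has_real_derivative B s t) (at s)"
    and \<phi>_t: "\<And>s t. \<bar>s\<bar> < \<delta> \<Longrightarrow> \<bar>t\<bar> < \<delta> \<Longrightarrow> ((\<lambda>t. \<phi> s t) has_real_derivative A s t) (at t)"
    and B_t: "\<And>s t. \<bar>s\<bar> < \<delta> \<Longrightarrow> \<bar>t\<bar> < \<delta> \<Longrightarrow> ((\<lambda>t. B s t) has_real_derivative B' s t) (at t)"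
    and cont: "continuous_on ({-\<delta><..<\<delta>} \<times> {-\<delta><..<\<delta>}) (\<lambda>(s, t). B' s t)"
  shows "A s 0 - A 0 0 = integral {0..s} (\<lambda>\<sigma>. B' \<sigma> 0)"
proof -
  define U where "U = {-\<delta><..<\<delta>}"
  have U: "open U" "convex U" "0 \<in> U" using s by (auto simp: U_def)
  have inU: "\<bar>\<sigma>\<bar> < \<delta>" if "\<sigma> \<in> {0..s}" for \<sigma> using that s by auto
  have ftc: "((\<lambda>\<sigma>. B \<sigma> t) has_integral (\<phi> s t - \<phi> 0 t)) {0..s}" if t: "t \<in> U" for t
  proof (rule fundamental_theorem_of_calculus)
    fix \<sigma> assume "\<sigma> \<in> {0..s}"
    then have "((\<lambda>s. \<phi> s t) has_real_derivative B \<sigma> t) (at \<sigma>)"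
      using \<phi>_s inU t by (auto simp: U_def)
    then show "((\<lambda>s. \<phi> s t) has_vector_derivative B \<sigma> t) (at \<sigma> within {0..s})"
      using has_real_derivative_iff_has_vector_derivative has_vector_derivative_at_within by blast
  qed (use s in simp)
  have "((\<lambda>t. integral (cbox 0 s) (\<lambda>\<sigma>. B \<sigma> t)) has_field_derivative
      integral (cbox 0 s) (\<lambda>\<sigma>. B' \<sigma> 0)) (at 0 within U)"
  proof (rule leibniz_rule_field_derivative[where fx="\<lambda>t \<sigma>. B' \<sigma> t"])
    fix t \<sigma> assume "t \<in> U" "\<sigma> \<in> cbox 0 s"
    then show "((\<lambda>t. B \<sigma> t) has_field_derivative B' \<sigma> t) (at t within U)"
      using B_t inU by (auto simp: U_def intro: has_field_derivative_at_within)
  next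
    have "continuous_on (U \<times> cbox 0 s) ((\<lambda>(s, t). B' s t) \<circ> (\<lambda>(t, \<sigma>). (\<sigma>, t)))"
    proof (rule continuous_on_compose)
      show "continuous_on (U \<times> cbox 0 s) (\<lambda>(t, \<sigma>). (\<sigma>, t))"
        by (simp add: case_prod_beta continuous_on_Pair continuous_on_fst continuous_on_snd)
      show "continuous_on ((\<lambda>(t, \<sigma>). (\<sigma>, t)) ` (U \<times> cbox 0 s)) (\<lambda>(s, t). B' s t)"
        by (rule continuous_on_subset[OF cont]) (use inU in \<open>auto simp: U_def\<close>)
    qed
    then show "continuous_on (U \<times> cbox 0 s) (\<lambda>(t, \<sigma>). B' \<sigma> t)"
      by (simp add: o_def case_prod_beta)
  qed (use U ftc in \<open>auto simp: cbox_interval\<close>)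
  then have "((\<lambda>t. integral {0..s} (\<lambda>\<sigma>. B \<sigma> t)) has_field_derivative
      integral {0..s} (\<lambda>\<sigma>. B' \<sigma> 0)) (at 0)"
    by (simp add: cbox_interval at_within_open[OF U(3,1)])
  then have "((\<lambda>t. \<phi> s t - \<phi> 0 t) has_field_derivative integral {0..s} (\<lambda>\<sigma>. B' \<sigma> 0)) (at 0)"
    by (rule has_field_derivative_transform_within_open[OF _ U(1,3)])
      (use ftc in \<open>auto simp: integral_unique\<close>)
  moreover have "((\<lambda>t. \<phi> s t - \<phi> 0 t) has_field_derivative A s 0 - A 0 0) (at 0)"
    using \<phi>_t s by (intro DERIV_diff) auto
  ultimately show ?thesis using DERIV_unique by blast
qed

text \<open>A form of Schwarz's theorem in which only the mixed partial B' (first in s, then in t)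
  is assumed to be continuous, and the other one only to exist at the origin.\<close>

lemma mixed_partials_eq:
  fixes \<phi> A B B' :: "real \<Rightarrow> real \<Rightarrow> real"
  assumes "\<delta> > 0"
    and \<phi>_s: "\<And>s t. \<bar>s\<bar> < \<delta> \<Longrightarrow> \<bar>t\<bar> < \<delta> \<Longrightarrow> ((\<lambda>s. \<phi> s t) has_real_derivative B s t) (at s)"
    and \<phi>_t: "\<And>s t. \<bar>s\<bar> < \<delta> \<Longrightarrow> \<bar>t\<bar> < \<delta> \<Longrightarrow> ((\<lambda>t. \<phi> s t) has_real_derivative A s t) (at t)"
    and B_t: "\<And>s t. \<bar>s\<bar> < \<delta> \<Longrightarrow> \<bar>t\<bar> < \<delta> \<Longrightarrow> ((\<lambda>t. B s t) has_real_derivative B' s t) (at t)"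
    and A_s: "((\<lambda>s. A s 0) has_real_derivative A') (at 0)"
    and cont: "continuous_on ({-\<delta><..<\<delta>} \<times> {-\<delta><..<\<delta>}) (\<lambda>(s, t). B' s t)"
  shows "A' = B' 0 0"
proof -
  define d where "d = \<delta> / 2"
  have d: "0 < d" "d < \<delta>" using assms(1) by (auto simp: d_def)
  have "continuous_on {0..d} (\<lambda>\<sigma>. (\<lambda>(s, t). B' s t) (\<sigma>, 0))"
    by (rule continuous_on_compose2[OF cont]) (use d in \<open>auto intro: continuous_intros\<close>)
  then have "continuous_on {0..d} (\<lambda>\<sigma>. B' \<sigma> 0)" by simp
  then have "((\<lambda>u. integral {0..u} (\<lambda>\<sigma>. B' \<sigma> 0)) has_vector_derivative B' 0 0) (at 0 within {0..d})"
    using integral_has_vector_derivative[of 0 d "\<lambda>\<sigma>. B' \<sigma> 0" 0] d by auto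
  moreover have "((\<lambda>u. integral {0..u} (\<lambda>\<sigma>. B' \<sigma> 0)) has_vector_derivative A') (at 0 within {0..d})"
  proof (rule has_vector_derivative_transform_within[OF _ d(1)])
    show "((\<lambda>s. A s 0 - A 0 0) has_vector_derivative A') (at 0 within {0..d})"
      using DERIV_diff[OF A_s DERIV_const] has_real_derivative_iff_has_vector_derivative
        has_vector_derivative_at_within by fastforce
    show "A s 0 - A 0 0 = integral {0..s} (\<lambda>\<sigma>. B' \<sigma> 0)" if "s \<in> {0..d}" for s
      using mixed_partial_integral[OF _ _ \<phi>_s \<phi>_t B_t cont] that d by auto
  qed (use d in auto)
  ultimately show ?thesis
    using vector_derivative_unique_within_closed_interval[of 0 d 0] d by auto
qed

section \<open>Lines of irrational slope on the torus\<close>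

lemma exists_between_notin_countable:
  fixes a b :: real
  assumes "countable C" "a < b"
  obtains x where "a < x" "x < b" "x \<notin> C"
proof -
  have "\<not> {a<..<b} \<subseteq> C"
    using assms countable_subset uncountable_open_interval by blast
  then obtain x where "x \<in> {a<..<b}" "x \<notin> C" by blast
  then show ?thesis using that by auto
qed

lemma irrational_slope_dense:
  fixes w :: "real^2"
  assumes "\<delta> > 0"
  obtains w' where "dist w' w < \<delta>" "w' $ 1 \<noteq> 0" "w' $ 2 / w' $ 1 \<notin> \<rat>"
proof -
  define a where "a = (if w $ 1 = 0 then \<delta> / 4 else w $ 1)"
  have a: "a \<noteq> 0" "\<bar>a - w $ 1\<bar> < \<delta> / 2" using assms by (auto simp: a_def)
  have countable: "countable ((\<lambda>r. a * r) ` \<rat>)" using countable_rat by blast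
  obtain y where y: "w $ 2 - \<delta> / 2 < y" "y < w $ 2 + \<delta> / 2" "y \<notin> (\<lambda>r. a * r) ` \<rat>"
    using exists_between_notin_countable[OF countable, of "w $ 2 - \<delta> / 2" "w $ 2 + \<delta> / 2"] assms
    by auto
  define w' :: "real^2" where "w' = (\<chi> i. if i = 1 then a else y)"
  have "dist w' w \<le> \<bar>a - w $ 1\<bar> + \<bar>y - w $ 2\<bar>"
    using norm_le_l1_cart[of "w' - w"] by (simp add: dist_norm sum_2 w'_def)
  also have "\<dots> < \<delta>" using a y by linarith
  finally have "dist w' w < \<delta>" .
  moreover have "y / a \<notin> \<rat>"
  proof
    assume "y / a \<in> \<rat>"
    then have "y \<in> (\<lambda>r. a * r) ` \<rat>" using a(1) by (intro image_eqI[of _ _ "y / a"]) auto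
    with y(3) show False ..
  qed
  ultimately show ?thesis using that a(1) by (simp add: w'_def)
qed

lemma periodic_irrational_flow_invariant_imp_const:
  fixes R :: "real^2 \<Rightarrow> real" and w :: "real^2"
  assumes cont: "\<And>z. isCont R z"
    and periodic: "\<And>z m. (\<forall>i. m $ i \<in> \<int>) \<Longrightarrow> R (z + m) = R z"
    and invariant: "\<And>z c. R (z + c *\<^sub>R w) = R z"
    and w: "w $ 1 \<noteq> 0" "w $ 2 / w $ 1 \<notin> \<rat>"
  shows "R x = R y"
proof -
  define e2 :: "real^2" where "e2 = axis 2 1"
  have e2: "e2 $ 1 = 0" "e2 $ 2 = 1" by (simp_all add: e2_def axis_def)
  txt \<open>By Kronecker's theorem k w2/w1 - h (h, k integers) comes arbitrarily close to every s,
    so the two invariances together approximate every vertical translation.\<close>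
  have vertical: "R (z + s *\<^sub>R e2) = R z" for z s
  proof (rule ccontr)
    assume ne: "R (z + s *\<^sub>R e2) \<noteq> R z"
    have "isCont (\<lambda>u. R (z + u *\<^sub>R e2)) s"
      by (intro continuous_intros isCont_o2[OF _ cont])
    then obtain \<epsilon> where "\<epsilon> > 0" and \<epsilon>: "\<And>u. dist s u < \<epsilon> \<Longrightarrow> R (z + u *\<^sub>R e2) \<noteq> R z"
      using continuous_at_avoid[of s "\<lambda>u. R (z + u *\<^sub>R e2)" "R z"] ne by auto
    obtain h k :: int where hk: "\<bar>of_int k * (w $ 2 / w $ 1) - of_int h - s\<bar> < \<epsilon>"
      using sequence_of_fractional_parts_is_dense[OF w(2) \<open>\<epsilon> > 0\<close>] by blast
    define u where "u = of_int k * (w $ 2 / w $ 1) - of_int h"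
    define m :: "real^2" where "m = (\<chi> i. if i = 1 then - of_int k else - of_int h)"
    have "z + u *\<^sub>R e2 = (z + (of_int k / w $ 1) *\<^sub>R w) + m"
      using w(1) by (simp add: vec_eq_iff forall_2 u_def m_def e2)
    moreover have "\<forall>i. m $ i \<in> \<int>" by (simp add: m_def)
    ultimately have "R (z + u *\<^sub>R e2) = R z" using periodic invariant by metis
    moreover have "dist s u < \<epsilon>" using hk by (simp add: u_def dist_real_def)
    ultimately show False using \<epsilon> by blast
  qed
  define c where "c = (y $ 1 - x $ 1) / w $ 1"
  have "y = (x + c *\<^sub>R w) + (y $ 2 - x $ 2 - c * w $ 2) *\<^sub>R e2"
    using w(1) by (simp add: vec_eq_iff forall_2 c_def e2)
  then show ?thesis using vertical invariant by metis
qed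

section \<open>Projective Finsler metrics\<close>

lemma ball_off_diagonal:
  fixes p q :: "'a::metric_space"
  assumes "z \<in> ball (p, q) (dist p q / 2)"
  shows "fst z \<noteq> snd z"
proof
  assume eq: "fst z = snd z"
  have "dist p q \<le> dist p (fst z) + dist (snd z) q"
    using dist_triangle[of p q "fst z"] eq by (simp add: dist_commute)
  also have "\<dots> \<le> 2 * dist (p, q) z"
    using dist_fst_le[of "(p, q)" z] dist_snd_le[of z "(p, q)"] by (simp add: dist_commute)
  also have "\<dots> < dist p q" using assms by simp
  finally show False by simp
qed

lemma small_perturbation_nonzero:
  fixes w h k :: "'a::real_normed_vector"
  assumes "w \<noteq> 0" "\<bar>s\<bar> < norm w / (norm h + norm k + 1)" "\<bar>t\<bar> < norm w / (norm h + norm k + 1)"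
  shows "w + t *\<^sub>R k - s *\<^sub>R h \<noteq> 0"
proof
  define \<delta> where "\<delta> = norm w / (norm h + norm k + 1)"
  have pos: "norm h + norm k + 1 > 0" by (simp add: add_nonneg_pos)
  have "\<delta> > 0" using assms(1) pos by (simp add: \<delta>_def)
  assume "w + t *\<^sub>R k - s *\<^sub>R h = 0"
  then have "norm w = norm (t *\<^sub>R k - s *\<^sub>R h)"
    by (metis add_diff_eq minus_diff_eq norm_minus_cancel diff_add_cancel diff_zero)
  also have "\<dots> \<le> \<bar>t\<bar> * norm k + \<bar>s\<bar> * norm h"
    using norm_triangle_ineq4[of "t *\<^sub>R k" "s *\<^sub>R h"] by simp
  also have "\<dots> \<le> \<delta> * norm k + \<delta> * norm h"
    using assms(2,3) by (intro add_mono mult_right_mono) (auto simp: \<delta>_def)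
  also have "\<dots> < \<delta> * (norm h + norm k + 1)"
    using \<open>\<delta> > 0\<close> by (simp add: algebra_simps)
  also have "\<dots> = norm w" using pos by (simp add: \<delta>_def)
  finally show False by simp
qed

locale projective_finsler =
  fixes F :: "real^2 \<Rightarrow> real^2 \<Rightarrow> real"
  assumes finsler: "finsler_C2 F" and projective: "projective F"
begin

definition FT :: "(real^2) \<times> (real^2) \<Rightarrow> real" where
  "FT z = F (fst z) (snd z)"

definition TM0 :: "((real^2) \<times> (real^2)) set" where
  "TM0 = {z. snd z \<noteq> 0}"

definition dF :: "(real^2) \<times> (real^2) \<Rightarrow> (real^2) \<times> (real^2) \<Rightarrow> real" where
  "dF z = frechet_derivative FT (at z)"

definition d2F :: "(real^2) \<times> (real^2) \<Rightarrow> (real^2) \<times> (real^2) \<Rightarrow> (real^2) \<times> (real^2) \<Rightarrow> real" where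
  "d2F z c = frechet_derivative (\<lambda>z. dF z c) (at z)"

abbreviation Fv :: "real^2 \<Rightarrow> real^2 \<Rightarrow> real^2 \<Rightarrow> real" where
  "Fv x v k \<equiv> dF (x, v) (0, k)"

abbreviation Fx :: "real^2 \<Rightarrow> real^2 \<Rightarrow> real^2 \<Rightarrow> real" where
  "Fx x v h \<equiv> dF (x, v) (h, 0)"

abbreviation Fvv :: "real^2 \<Rightarrow> real^2 \<Rightarrow> real^2 \<Rightarrow> real^2 \<Rightarrow> real" where
  "Fvv x v k h \<equiv> d2F (x, v) (0, k) (0, h)"

lemma open_TM0: "open TM0"
  unfolding TM0_def by (intro open_Collect_neq continuous_intros)

lemma mem_TM0 [simp]: "(x, v) \<in> TM0 \<longleftrightarrow> v \<noteq> 0"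
  by (simp add: TM0_def)

lemma Ck2_FT: "Ck 2 TM0 FT"
  using finsler unfolding finsler_C2_def FT_def[abs_def] TM0_def by simp

lemma has_derivative_FT: "z \<in> TM0 \<Longrightarrow> (FT has_derivative dF z) (at z)"
  unfolding dF_def using Ck_Suc_has_derivative[OF Ck2_FT[unfolded numeral_2_eq_2] open_TM0] .

lemma Ck1_dF: "Ck 1 TM0 (\<lambda>z. dF z c)"
  unfolding dF_def One_nat_def
  using Ck_frechet_derivative[OF open_TM0 Ck2_FT[unfolded numeral_2_eq_2]] .

lemma has_derivative_dF: "z \<in> TM0 \<Longrightarrow> ((\<lambda>z. dF z c) has_derivative d2F z c) (at z)"
  unfolding d2F_def using Ck_Suc_has_derivative[OF Ck1_dF[unfolded One_nat_def] open_TM0] .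

lemma linear_dF: "z \<in> TM0 \<Longrightarrow> linear (dF z)"
  using has_derivative_FT has_derivative_linear by blast

lemma linear_d2F: "z \<in> TM0 \<Longrightarrow> linear (d2F z c)"
  using has_derivative_dF has_derivative_linear by blast

lemma dF_linear_simps:
  assumes "z \<in> TM0"
  shows "dF z (a + b) = dF z a + dF z b" "dF z (a - b) = dF z a - dF z b"
    "dF z (t *\<^sub>R a) = t * dF z a" "dF z 0 = 0"
  using linear_dF[OF assms] by (simp_all add: linear_add linear_diff linear_scale linear_0)

lemma Fv_zero: "v \<noteq> 0 \<Longrightarrow> Fv x v 0 = 0"
  using dF_linear_simps(4)[of "(x, v)"] by (simp add: zero_prod_def)

lemma d2F_scaleR: "z \<in> TM0 \<Longrightarrow> d2F z c (t *\<^sub>R a) = t * d2F z c a"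
  using linear_d2F linear_scale by fastforce

lemma continuous_on_FT: "continuous_on TM0 FT"
  using Ck2_FT Ck_imp_continuous_on by blast

lemma continuous_on_dF: "continuous_on TM0 (\<lambda>z. dF z c)"
  using Ck1_dF Ck_imp_continuous_on by blast

lemma continuous_on_d2F: "continuous_on TM0 (\<lambda>z. d2F z c d)"
  unfolding d2F_def using Ck_frechet_derivative[OF open_TM0 Ck1_dF[unfolded One_nat_def]]
  by (simp add: Ck_imp_continuous_on)

lemma isCont_d2F:
  assumes "v \<noteq> 0"
  shows "isCont (\<lambda>z. d2F z c d) (x, v)"
  using continuous_on_d2F open_TM0 assms by (simp add: continuous_on_eq_continuous_at)

lemma isCont_d2F_horizontal:
  assumes "v \<noteq> 0"
  shows "isCont (\<lambda>x. d2F (x, v) c d) x"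
proof -
  have "isCont (\<lambda>x. (x, v)) x" by (intro continuous_intros)
  moreover have "isCont (\<lambda>z. d2F z c d) (x, v)" using isCont_d2F[OF assms] .
  ultimately show ?thesis by (rule isCont_o2)
qed

lemma isCont_d2F_vertical:
  assumes "v \<noteq> 0"
  shows "isCont (\<lambda>v. d2F (x, v) c d) v"
proof -
  have "isCont (\<lambda>v. (x, v)) v" by (intro continuous_intros)
  moreover have "isCont (\<lambda>z. d2F z c d) (x, v)" using isCont_d2F[OF assms] .
  ultimately show ?thesis by (rule isCont_o2)
qed

lemma Ck2_F_horizontal: "v \<noteq> 0 \<Longrightarrow> Ck 2 UNIV (\<lambda>x. F x v)"
  using Ck_slice[OF open_TM0 _ Ck2_FT, of v] by (simp add: FT_def)

lemma continuous_on_dF_compose: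
  assumes "continuous_on T a" "a ` T \<subseteq> TM0" "continuous_on T c"
  shows "continuous_on T (\<lambda>y. dF (a y) (c y))"
proof -
  have "continuous_on T (\<lambda>y. \<Sum>b\<in>Basis. (c y \<bullet> b) * dF (a y) b)"
    by (intro continuous_intros assms continuous_on_compose2[OF continuous_on_dF assms(1,2)])
  moreover have "dF (a y) (c y) = (\<Sum>b\<in>Basis. (c y \<bullet> b) * dF (a y) b)" if "y \<in> T" for y
    using linear_eq_sum_Basis linear_dF assms(2) that by blast
  ultimately show ?thesis using continuous_on_cong by fastforce
qed

lemma has_derivative_F_vertical: "v \<noteq> 0 \<Longrightarrow> (F x has_derivative Fv x v) (at v)"
  using has_derivative_compose[OF has_derivative_Pair[OF has_derivative_const has_derivative_ident]
      has_derivative_FT, of x v]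
  by (simp add: FT_def)

lemma has_derivative_F_horizontal: "v \<noteq> 0 \<Longrightarrow> ((\<lambda>y. F y v) has_derivative Fx x v) (at x)"
  using has_derivative_compose[OF has_derivative_Pair[OF has_derivative_ident has_derivative_const]
      has_derivative_FT, of x v]
  by (simp add: FT_def)

lemma has_derivative_dF_vertical:
  "v \<noteq> 0 \<Longrightarrow> ((\<lambda>v. dF (x, v) c) has_derivative (\<lambda>h. d2F (x, v) c (0, h))) (at v)"
  using has_derivative_compose[OF has_derivative_Pair[OF has_derivative_const has_derivative_ident]
      has_derivative_dF, of x v]
  by simp

lemma euler_lagrange_line:
  assumes "v \<noteq> 0"
  shows "((\<lambda>s. Fv (x + s *\<^sub>R v) v b) has_real_derivative Fx (x + t *\<^sub>R v) v b) (at t)"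
proof -
  have "frechet_derivative (F y) (at v) = Fv y v" "frechet_derivative (\<lambda>y. F y v) (at y) = Fx y v" for y
    using frechet_derivative_at[OF has_derivative_F_vertical[OF assms]]
      frechet_derivative_at[OF has_derivative_F_horizontal[OF assms]] by simp_all
  moreover have "((\<lambda>s. frechet_derivative (F (x + s *\<^sub>R v)) (at v) b) has_real_derivative
      frechet_derivative (\<lambda>y. F y v) (at (x + t *\<^sub>R v)) b) (at t)"
    using projective assms unfolding projective_def by blast
  ultimately show ?thesis by simp
qed

lemma minkowski_norm_F: "minkowski_norm (F x)"
  using finsler unfolding finsler_C2_def by blast

lemma F_pos_homogeneous: "t > 0 \<Longrightarrow> F x (t *\<^sub>R v) = t * F x v"
  using minkowski_norm_F unfolding minkowski_norm_def by blast

lemma F_zero_vector [simp]: "F x 0 = 0"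
  using minkowski_norm_F unfolding minkowski_norm_def by blast

lemma euler_identity:
  assumes "v \<noteq> 0"
  shows "Fv x v v = F x v"
proof -
  have "(F x has_derivative Fv x v) (at ((\<lambda>c. c *\<^sub>R v) 1))"
    using has_derivative_F_vertical[OF assms] by simp
  from has_derivative_compose[OF has_derivative_scaleR_left[OF has_derivative_ident] this]
  have "((\<lambda>c. F x (c *\<^sub>R v)) has_derivative (\<lambda>h. Fv x v (h *\<^sub>R v))) (at 1)" by simp
  moreover have "((\<lambda>c. c * F x v) has_derivative (\<lambda>h. h * F x v)) (at 1)"
    by (auto intro!: derivative_eq_intros)
  then have "((\<lambda>c. F x (c *\<^sub>R v)) has_derivative (\<lambda>h. h * F x v)) (at 1)"
    by (rule has_derivative_transform_within_open[where s = "{0<..}"]) (auto simp: F_pos_homogeneous)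
  ultimately have "(\<lambda>h. Fv x v (h *\<^sub>R v)) = (\<lambda>h. h * F x v)"
    by (rule has_derivative_unique)
  from fun_cong[OF this, of 1] show ?thesis by simp
qed

lemma Fv_pos_homogeneous:
  assumes "c > 0" "v \<noteq> 0"
  shows "Fv x (c *\<^sub>R v) k = Fv x v k"
proof -
  have cv: "c *\<^sub>R v \<noteq> 0" using assms by simp
  have "((\<lambda>w. F x (c *\<^sub>R w)) has_derivative (\<lambda>h. Fv x (c *\<^sub>R v) (c *\<^sub>R h))) (at v)"
    using has_derivative_compose[OF has_derivative_scaleR_right[OF has_derivative_ident, of c]
        has_derivative_F_vertical[OF cv]] by simp
  moreover have "((\<lambda>w. F x (c *\<^sub>R w)) has_derivative (\<lambda>h. c * Fv x v h)) (at v)"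
    unfolding F_pos_homogeneous[OF assms(1)]
    by (rule has_derivative_mult_right[OF has_derivative_F_vertical[OF assms(2)]])
  ultimately have "(\<lambda>h. Fv x (c *\<^sub>R v) (c *\<^sub>R h)) = (\<lambda>h. c * Fv x v h)"
    by (rule has_derivative_unique)
  from fun_cong[OF this, of k] have "c * Fv x (c *\<^sub>R v) k = c * Fv x v k"
    using dF_linear_simps(3)[of "(x, c *\<^sub>R v)" c "(0, k)"] cv by simp
  then show ?thesis using assms(1) by simp
qed

lemma Fvv_pos_homogeneous:
  assumes "c > 0" "v \<noteq> 0"
  shows "c * Fvv x (c *\<^sub>R v) k h = Fvv x v k h"
proof -
  have cv: "c *\<^sub>R v \<noteq> 0" using assms by simp
  have "((\<lambda>w. Fv x (c *\<^sub>R w) k) has_derivative (\<lambda>h. d2F (x, c *\<^sub>R v) (0, k) (0, c *\<^sub>R h))) (at v)"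
    using has_derivative_compose[OF has_derivative_scaleR_right[OF has_derivative_ident, of c]
        has_derivative_dF_vertical[OF cv]] by simp
  moreover have "((\<lambda>w. Fv x (c *\<^sub>R w) k) has_derivative (\<lambda>h. Fvv x v k h)) (at v)"
    by (rule has_derivative_transform_within_open[OF has_derivative_dF_vertical[OF assms(2)], of "- {0}"])
      (use assms Fv_pos_homogeneous in auto)
  ultimately have "(\<lambda>h. d2F (x, c *\<^sub>R v) (0, k) (0, c *\<^sub>R h)) = (\<lambda>h. Fvv x v k h)"
    by (rule has_derivative_unique)
  from fun_cong[OF this, of h]
  have "d2F (x, c *\<^sub>R v) (0, k) (0, c *\<^sub>R h) = Fvv x v k h" .
  then show ?thesis
    using d2F_scaleR[of "(x, c *\<^sub>R v)" "(0, k)" c "(0, h)"] cv by simp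
qed

lemma has_real_derivative_dF_line:
  assumes "y + t *\<^sub>R u \<noteq> 0"
  shows "((\<lambda>t. dF (x + t *\<^sub>R v, y + t *\<^sub>R u) c) has_real_derivative
    d2F (x + t *\<^sub>R v, y + t *\<^sub>R u) c (v, u)) (at t)"
proof -
  have z: "(x + t *\<^sub>R v, y + t *\<^sub>R u) \<in> TM0" using assms by simp
  have "((\<lambda>t. (x + t *\<^sub>R v, y + t *\<^sub>R u)) has_derivative (\<lambda>s. s *\<^sub>R (v, u))) (at t)"
    by (auto intro!: derivative_eq_intros)
  from has_derivative_compose[OF this has_derivative_dF[OF z]]
  have "((\<lambda>t. dF (x + t *\<^sub>R v, y + t *\<^sub>R u) c) has_derivative
      (\<lambda>s. d2F (x + t *\<^sub>R v, y + t *\<^sub>R u) c (s *\<^sub>R (v, u)))) (at t)" .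
  then show ?thesis
    unfolding has_field_derivative_def d2F_scaleR[OF z]
    by (simp add: mult.commute[of _ "d2F (x + t *\<^sub>R v, y + t *\<^sub>R u) c (v, u)"])
qed

definition seg_lift :: "real \<Rightarrow> (real^2) \<times> (real^2) \<Rightarrow> (real^2) \<times> (real^2)" where
  "seg_lift \<sigma> z = (fst z + \<sigma> *\<^sub>R (snd z - fst z), snd z - fst z)"

definition seg_length :: "(real^2) \<times> (real^2) \<Rightarrow> real" where
  "seg_length z = integral {0..1} (\<lambda>\<sigma>. FT (seg_lift \<sigma> z))"

lemma linear_seg_lift: "linear (seg_lift \<sigma>)"
  unfolding seg_lift_def by (rule linearI) (auto simp: algebra_simps)

lemma seg_lift_in_TM0 [simp]: "seg_lift \<sigma> z \<in> TM0 \<longleftrightarrow> fst z \<noteq> snd z"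
  by (auto simp: seg_lift_def TM0_def)

lemma integral_dF_seg_lift:
  assumes "w \<noteq> 0"
  shows "integral {0..1} (\<lambda>t. dF (seg_lift t (p, p + w)) (seg_lift t (h, k))) =
    Fv (p + w) w k - Fv p w h"
proof -
  txt \<open>By the Euler-Lagrange equation along the segment, the integrand is the derivative of \<Phi>.\<close>
  define \<Phi> where "\<Phi> s = s * Fv (p + s *\<^sub>R w) w k + (1 - s) * Fv (p + s *\<^sub>R w) w h" for s
  have "(\<Phi> has_real_derivative dF (seg_lift t (p, p + w)) (seg_lift t (h, k))) (at t)" for t
  proof -
    have z: "(p + t *\<^sub>R w, w) \<in> TM0" using assms by simp
    have "seg_lift t (p, p + w) = (p + t *\<^sub>R w, w)"
      "seg_lift t (h, k) = ((1 - t) *\<^sub>R (h, 0) + t *\<^sub>R (k, 0)) + ((0, k) - (0, h))"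
      by (simp_all add: seg_lift_def algebra_simps)
    then have integrand: "dF (seg_lift t (p, p + w)) (seg_lift t (h, k)) =
        ((1 - t) * Fx (p + t *\<^sub>R w) w h + t * Fx (p + t *\<^sub>R w) w k)
        + (Fv (p + t *\<^sub>R w) w k - Fv (p + t *\<^sub>R w) w h)"
      by (simp only: dF_linear_simps[OF z])
    have "(\<Phi> has_real_derivative
        (Fv (p + t *\<^sub>R w) w k + t * Fx (p + t *\<^sub>R w) w k)
        + (- Fv (p + t *\<^sub>R w) w h + (1 - t) * Fx (p + t *\<^sub>R w) w h)) (at t)"
      unfolding \<Phi>_def
      by (auto intro!: derivative_eq_intros euler_lagrange_line[OF assms])
    then show ?thesis
      unfolding integrand by (rule DERIV_cong) (simp add: algebra_simps)
  qed
  then have "((\<lambda>t. dF (seg_lift t (p, p + w)) (seg_lift t (h, k))) has_integral (\<Phi> 1 - \<Phi> 0)) {0..1}"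
    by (intro fundamental_theorem_of_calculus)
      (auto simp: has_real_derivative_iff_has_vector_derivative intro: has_vector_derivative_at_within)
  then show ?thesis by (simp add: \<Phi>_def integral_unique)
qed

definition dF_seg_lift ::
    "(real^2) \<times> (real^2) \<Rightarrow> real \<Rightarrow> ((real^2) \<times> (real^2)) \<Rightarrow>\<^sub>L real" where
  "dF_seg_lift z \<sigma> = Blinfun (\<lambda>c. dF (seg_lift \<sigma> z) (seg_lift \<sigma> c))"

lemma blinfun_apply_dF_seg_lift:
  assumes "fst z \<noteq> snd z"
  shows "blinfun_apply (dF_seg_lift z \<sigma>) = (\<lambda>c. dF (seg_lift \<sigma> z) (seg_lift \<sigma> c))"
proof -
  have "linear (dF (seg_lift \<sigma> z) \<circ> seg_lift \<sigma>)"
    by (rule linear_compose[OF linear_seg_lift linear_dF]) (simp add: assms)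
  then show ?thesis
    unfolding dF_seg_lift_def
    by (intro bounded_linear_Blinfun_apply) (simp add: o_def linear_conv_bounded_linear)
qed

lemma has_derivative_FT_seg_lift:
  assumes "fst z \<noteq> snd z"
  shows "((\<lambda>z. FT (seg_lift \<sigma> z)) has_derivative blinfun_apply (dF_seg_lift z \<sigma>)) (at z)"
  unfolding blinfun_apply_dF_seg_lift[OF assms]
  by (rule has_derivative_compose[OF bounded_linear_imp_has_derivative has_derivative_FT])
    (use linear_seg_lift assms in \<open>auto simp: linear_conv_bounded_linear\<close>)

lemma continuous_on_dF_seg_lift:
  assumes "\<And>z. z \<in> U \<Longrightarrow> fst z \<noteq> snd z"
  shows "continuous_on (U \<times> cbox 0 1) (\<lambda>(z, \<sigma>). dF_seg_lift z \<sigma>)"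
proof (rule continuous_on_blinfun_componentwise)
  fix i :: "(real^2) \<times> (real^2)"
  have "continuous_on (U \<times> cbox 0 1) (\<lambda>x. dF (seg_lift (snd x) (fst x)) (seg_lift (snd x) i))"
  proof (rule continuous_on_dF_compose)
    show "(\<lambda>x. seg_lift (snd x) (fst x)) ` (U \<times> cbox 0 1) \<subseteq> TM0"
      using assms by auto
  qed (unfold seg_lift_def; intro continuous_intros)+
  then show "continuous_on (U \<times> cbox 0 1) (\<lambda>x. blinfun_apply ((\<lambda>(z, \<sigma>). dF_seg_lift z \<sigma>) x) i)"
    by (rule continuous_on_eq) (simp add: blinfun_apply_dF_seg_lift assms case_prod_beta mem_Times_iff)
qed

lemma has_derivative_seg_length:
  assumes "p \<noteq> q"
  shows "(seg_length has_derivative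
    (\<lambda>c. integral {0..1} (\<lambda>\<sigma>. dF (seg_lift \<sigma> (p, q)) (seg_lift \<sigma> c)))) (at (p, q))"
proof -
  define U where "U = ball (p, q) (dist p q / 2)"
  have U: "open U" "convex U" "(p, q) \<in> U" using assms by (auto simp: U_def)
  have off_diagonal: "fst z \<noteq> snd z" if "z \<in> U" for z
    using ball_off_diagonal that by (simp add: U_def)
  note cont = continuous_on_dF_seg_lift[OF off_diagonal]
  have "((\<lambda>z. integral (cbox 0 1) (\<lambda>\<sigma>. FT (seg_lift \<sigma> z))) has_derivative
      integral (cbox 0 1) (dF_seg_lift (p, q))) (at (p, q) within U)"
  proof (rule leibniz_rule[OF _ _ cont U(3,2)])
    fix z \<sigma> assume "z \<in> U"
    then show "((\<lambda>z. FT (seg_lift \<sigma> z)) has_derivative blinfun_apply (dF_seg_lift z \<sigma>)) (at z within U)"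
      by (intro has_derivative_at_withinI[OF has_derivative_FT_seg_lift] off_diagonal)
  next
    fix z assume "z \<in> U"
    have "continuous_on (cbox 0 1) (\<lambda>\<sigma>. FT (seg_lift \<sigma> z))"
    proof (rule continuous_on_compose2[OF continuous_on_FT])
      show "continuous_on (cbox 0 1) (\<lambda>\<sigma>. seg_lift \<sigma> z)"
        unfolding seg_lift_def by (intro continuous_intros)
    qed (use off_diagonal[OF \<open>z \<in> U\<close>] in auto)
    then show "(\<lambda>\<sigma>. FT (seg_lift \<sigma> z)) integrable_on cbox 0 1"
      by (rule integrable_continuous)
  qed
  then have deriv: "(seg_length has_derivative integral (cbox 0 1) (dF_seg_lift (p, q))) (at (p, q))"
    unfolding seg_length_def[abs_def] at_within_open[OF U(3,1)] by (simp add: cbox_interval)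
  have "continuous_on (cbox 0 1) (\<lambda>\<sigma>. (\<lambda>(z, \<sigma>). dF_seg_lift z \<sigma>) ((p, q), \<sigma>))"
    by (rule continuous_on_compose2[OF cont continuous_on_Pair[OF continuous_on_const continuous_on_id]])
      (use U(3) in auto)
  then have "dF_seg_lift (p, q) integrable_on cbox 0 1" by (simp add: integrable_continuous_real)
  then have "blinfun_apply (integral (cbox 0 1) (dF_seg_lift (p, q))) =
      (\<lambda>c. integral {0..1} (\<lambda>\<sigma>. dF (seg_lift \<sigma> (p, q)) (seg_lift \<sigma> c)))"
    by (simp add: fun_eq_iff blinfun_apply_integral blinfun_apply_dF_seg_lift assms cbox_interval)
  with deriv show ?thesis by simp
qed

lemma first_variation:
  assumes "p \<noteq> q"
  shows "(seg_length has_derivative (\<lambda>c. Fv q (q - p) (snd c) - Fv p (q - p) (fst c))) (at (p, q))"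
proof -
  have "integral {0..1} (\<lambda>\<sigma>. dF (seg_lift \<sigma> (p, q)) (seg_lift \<sigma> c)) =
      Fv q (q - p) (snd c) - Fv p (q - p) (fst c)" for c
    using integral_dF_seg_lift[of "q - p" p "fst c" "snd c"] assms by simp
  then show ?thesis using has_derivative_seg_length[OF assms] by simp
qed

lemma seg_length_line:
  assumes "a + t *\<^sub>R h \<noteq> b + t *\<^sub>R k"
  shows "((\<lambda>t. seg_length (a + t *\<^sub>R h, b + t *\<^sub>R k)) has_real_derivative
    Fv (b + t *\<^sub>R k) (b + t *\<^sub>R k - (a + t *\<^sub>R h)) k
    - Fv (a + t *\<^sub>R h) (b + t *\<^sub>R k - (a + t *\<^sub>R h)) h) (at t)"
proof -
  define P Q where "P = a + t *\<^sub>R h" and "Q = b + t *\<^sub>R k"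
  have line: "((\<lambda>t. (a + t *\<^sub>R h, b + t *\<^sub>R k)) has_derivative (\<lambda>s. s *\<^sub>R (h, k))) (at t)"
    by (auto intro!: derivative_eq_intros)
  have "(seg_length has_derivative (\<lambda>c. Fv Q (Q - P) (snd c) - Fv P (Q - P) (fst c)))
      (at ((\<lambda>t. (a + t *\<^sub>R h, b + t *\<^sub>R k)) t))"
    using first_variation assms by (simp add: P_def Q_def)
  from has_derivative_compose[OF line this]
  have "((\<lambda>t. seg_length (a + t *\<^sub>R h, b + t *\<^sub>R k)) has_derivative
      (\<lambda>s. Fv Q (Q - P) (s *\<^sub>R k) - Fv P (Q - P) (s *\<^sub>R h))) (at t)"
    by simp
  moreover have "(\<lambda>s. Fv Q (Q - P) (s *\<^sub>R k) - Fv P (Q - P) (s *\<^sub>R h)) =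
      (*) (Fv Q (Q - P) k - Fv P (Q - P) h)"
  proof
    fix s
    show "Fv Q (Q - P) (s *\<^sub>R k) - Fv P (Q - P) (s *\<^sub>R h) = (Fv Q (Q - P) k - Fv P (Q - P) h) * s"
      using dF_linear_simps(3)[of "(Q, Q - P)" s "(0, k)"] dF_linear_simps(3)[of "(P, Q - P)" s "(0, h)"]
        assms
      by (simp add: P_def Q_def algebra_simps)
  qed
  ultimately show ?thesis
    unfolding has_field_derivative_def P_def[symmetric] Q_def[symmetric] by simp
qed

lemma Fvv_swap:
  assumes w: "w \<noteq> 0"
  shows "Fvv (p + w) w k h = Fvv p w h k"
proof -
  define \<delta> where "\<delta> = norm w / (norm h + norm k + 1)"
  have "\<delta> > 0" using w by (simp add: \<delta>_def add_nonneg_pos)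
  have W: "w + t *\<^sub>R k - s *\<^sub>R h \<noteq> 0" if "\<bar>s\<bar> < \<delta>" "\<bar>t\<bar> < \<delta>" for s t
    using small_perturbation_nonzero[OF w] that by (simp add: \<delta>_def)
  txt \<open>The mixed second partials of \<phi> at the origin are -Fvv (p + w) w k h and -Fvv p w h k.\<close>
  define \<phi> where "\<phi> s t = seg_length (p + s *\<^sub>R h, p + w + t *\<^sub>R k)" for s t
  define A where "A s t = Fv (p + w + t *\<^sub>R k) (w + t *\<^sub>R k - s *\<^sub>R h) k" for s t
  define B where "B s t = - Fv (p + s *\<^sub>R h) (w + t *\<^sub>R k - s *\<^sub>R h) h" for s t
  define B' where "B' s t = - Fvv (p + s *\<^sub>R h) (w + t *\<^sub>R k - s *\<^sub>R h) h k" for s t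
  have \<phi>_s: "((\<lambda>s. \<phi> s t) has_real_derivative B s t) (at s)" if "\<bar>s\<bar> < \<delta>" "\<bar>t\<bar> < \<delta>" for s t
    using seg_length_line[of p s h "p + w + t *\<^sub>R k" 0] W[OF that]
    by (simp add: \<phi>_def B_def Fv_zero algebra_simps)
  have \<phi>_t: "((\<lambda>t. \<phi> s t) has_real_derivative A s t) (at t)" if "\<bar>s\<bar> < \<delta>" "\<bar>t\<bar> < \<delta>" for s t
    using seg_length_line[of "p + s *\<^sub>R h" t 0 "p + w" k] W[OF that]
    by (simp add: \<phi>_def A_def Fv_zero algebra_simps)
  have B_t: "((\<lambda>t. B s t) has_real_derivative B' s t) (at t)" if "\<bar>s\<bar> < \<delta>" "\<bar>t\<bar> < \<delta>" for s t
    using DERIV_minus[OF has_real_derivative_dF_line[of "w - s *\<^sub>R h" t k "p + s *\<^sub>R h" 0 "(0, h)"]]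
      W[OF that]
    by (simp add: B_def B'_def algebra_simps)
  have A_s: "((\<lambda>s. A s 0) has_real_derivative - Fvv (p + w) w k h) (at 0)"
    using has_real_derivative_dF_line[of w 0 "- h" "p + w" 0 "(0, k)"] w
      d2F_scaleR[of "(p + w, w)" "(0, k)" "-1" "(0, h)"]
    by (simp add: A_def)
  have "continuous_on ({-\<delta><..<\<delta>} \<times> {-\<delta><..<\<delta>})
      (\<lambda>x. d2F (p + fst x *\<^sub>R h, w + snd x *\<^sub>R k - fst x *\<^sub>R h) (0, h) (0, k))"
    by (rule continuous_on_compose2[OF continuous_on_d2F]) (use W in \<open>auto intro!: continuous_intros\<close>)
  then have "continuous_on ({-\<delta><..<\<delta>} \<times> {-\<delta><..<\<delta>}) (\<lambda>(s, t). B' s t)"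
    by (auto simp: B'_def case_prod_beta intro: continuous_on_minus)
  from mixed_partials_eq[OF \<open>\<delta> > 0\<close> \<phi>_s \<phi>_t B_t A_s this] show ?thesis
    by (simp add: B'_def)
qed

lemma Fvv_shift_swap:
  assumes "c > 0" "w \<noteq> 0"
  shows "Fvv (p + c *\<^sub>R w) w k h = Fvv p w h k"
proof -
  have "Fvv (p + c *\<^sub>R w) w k h = c * Fvv (p + c *\<^sub>R w) (c *\<^sub>R w) k h"
    using Fvv_pos_homogeneous[OF assms] by simp
  also have "\<dots> = c * Fvv p (c *\<^sub>R w) h k"
    using Fvv_swap assms by simp
  also have "\<dots> = Fvv p w h k"
    using Fvv_pos_homogeneous[OF assms] by simp
  finally show ?thesis .
qed

lemma Fvv_sym:
  assumes "w \<noteq> 0"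
  shows "Fvv p w k h = Fvv p w h k"
proof -
  define g where "g c = Fvv (p + c *\<^sub>R w) w k h" for c :: real
  have "isCont (\<lambda>c. p + c *\<^sub>R w) 0" by (intro continuous_intros)
  moreover have "isCont (\<lambda>x. Fvv x w k h) (p + 0 *\<^sub>R w)"
    by (rule isCont_d2F_horizontal[OF assms])
  ultimately have "isCont g 0"
    unfolding g_def by (rule isCont_o2)
  then have "(g \<longlongrightarrow> g 0) (at_right 0)"
    by (simp add: isCont_def filterlim_at_split)
  moreover have "eventually (\<lambda>c. g c = Fvv p w h k) (at_right 0)"
    unfolding eventually_at_right[OF zero_less_one] g_def
    using Fvv_shift_swap[OF _ assms] by (intro exI[of _ 1]) auto
  then have "(g \<longlongrightarrow> Fvv p w h k) (at_right 0)"
    by (rule tendsto_eventually)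
  ultimately have "g 0 = Fvv p w h k"
    using tendsto_unique[OF trivial_limit_at_right_real] by blast
  then show ?thesis by (simp add: g_def)
qed

lemma Fvv_line_invariant:
  assumes "w \<noteq> 0"
  shows "Fvv (p + c *\<^sub>R w) w k h = Fvv p w k h"
proof (cases "c > 0")
  case True
  then show ?thesis using Fvv_shift_swap Fvv_sym assms by simp
next
  case False
  show ?thesis
  proof (cases "c = 0")
    case False
    then have "Fvv ((p + c *\<^sub>R w) + (- c) *\<^sub>R w) w k h = Fvv (p + c *\<^sub>R w) w h k"
      using \<open>\<not> c > 0\<close> by (intro Fvv_shift_swap assms) simp
    then show ?thesis using Fvv_sym[OF assms] by simp
  qed simp
qed

end

section \<open>Periodic projective Finsler metrics\<close>

locale periodic_projective_finsler = projective_finsler +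
  assumes periodic: "periodic F"
begin

lemma dF_periodic:
  assumes "\<forall>i. m $ i \<in> \<int>"
  shows "dF (x + m, v) = dF (x, v)"
proof -
  have "FT (z + (m, 0)) = FT z" for z
    using periodic assms unfolding periodic_def FT_def by simp
  from frechet_derivative_periodic[of FT, OF this, of "(x, v)"] show ?thesis
    by (simp add: dF_def)
qed

lemma d2F_periodic:
  assumes "\<forall>i. m $ i \<in> \<int>"
  shows "d2F (x + m, v) = d2F (x, v)"
proof -
  have "dF (z + (m, 0)) c = dF z c" for z c
    using dF_periodic[OF assms, of "fst z" "snd z"] by (cases z) simp
  then have "frechet_derivative (\<lambda>z. dF z c) (at ((x, v) + (m, 0))) =
      frechet_derivative (\<lambda>z. dF z c) (at (x, v))" for c
    by (rule frechet_derivative_periodic)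
  then show ?thesis by (simp add: d2F_def fun_eq_iff)
qed

lemma Fvv_const_irrational_slope:
  assumes "w $ 1 \<noteq> 0" "w $ 2 / w $ 1 \<notin> \<rat>"
  shows "Fvv x w k h = Fvv y w k h"
proof (rule periodic_irrational_flow_invariant_imp_const[where R = "\<lambda>x. Fvv x w k h", OF _ _ _ assms])
  have w: "w \<noteq> 0" using assms(1) by auto
  show "isCont (\<lambda>x. Fvv x w k h) z" for z
    using isCont_d2F_horizontal[OF w] .
  show "Fvv (z + c *\<^sub>R w) w k h = Fvv z w k h" for z c
    using Fvv_line_invariant[OF w] .
qed (simp add: d2F_periodic)

lemma Fvv_horizontally_const:
  assumes "w \<noteq> 0"
  shows "Fvv x w k h = Fvv y w k h"
proof (rule ccontr)
  define g where "g w' = Fvv x w' k h - Fvv y w' k h" for w'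
  assume "Fvv x w k h \<noteq> Fvv y w k h"
  then have "g w \<noteq> 0" by (simp add: g_def)
  moreover have "isCont g w"
    unfolding g_def
    by (intro isCont_diff isCont_d2F_vertical assms)
  ultimately obtain \<epsilon> where "\<epsilon> > 0" and \<epsilon>: "\<And>w'. dist w w' < \<epsilon> \<Longrightarrow> g w' \<noteq> 0"
    using continuous_at_avoid[of w g 0] by auto
  obtain w' where "dist w' w < \<epsilon>" "w' $ 1 \<noteq> 0" "w' $ 2 / w' $ 1 \<notin> \<rat>"
    using irrational_slope_dense[OF \<open>\<epsilon> > 0\<close>] by blast
  then show False
    using \<epsilon>[of w'] Fvv_const_irrational_slope by (simp add: g_def dist_commute)
qed

lemma Fv_diff_vertically_const:
  assumes "v \<noteq> 0" "v0 \<noteq> 0"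
  shows "Fv x v k - Fv y v k = Fv x v0 k - Fv y v0 k"
proof (rule has_derivative_zero_unique_connected[of "- {0}" "\<lambda>v. Fv x v k - Fv y v k"])
  show "open (- {0 :: real^2})" by (simp add: open_Compl)
  show "connected (- {0 :: real^2})" by (simp add: connected_punctured_universe)
  fix u :: "real^2" assume "u \<in> - {0}"
  then have "((\<lambda>v. Fv x v k - Fv y v k) has_derivative (\<lambda>h. Fvv x u k h - Fvv y u k h)) (at u)"
    by (intro has_derivative_diff has_derivative_dF_vertical) auto
  then show "((\<lambda>v. Fv x v k - Fv y v k) has_derivative (\<lambda>h. 0)) (at u)"
    using Fvv_horizontally_const[of u x k _ y] \<open>u \<in> - {0}\<close> by simp
qed (use assms in auto)

lemma F_diff_eq_Fv_diff:
  assumes "v0 \<noteq> 0"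
  shows "F x v - F y v = Fv x v0 v - Fv y v0 v"
proof (cases "v = 0")
  case True
  then show ?thesis using Fv_zero assms by simp
next
  case False
  then show ?thesis
    using euler_identity[OF False, of x] euler_identity[OF False, of y]
      Fv_diff_vertically_const[OF False assms, of x v y] by simp
qed

lemma has_derivative_seg_length_primitive:
  assumes "q \<noteq> p"
  shows "((\<lambda>q. seg_length (p, q) - F 0 (q - p)) has_derivative (\<lambda>k. F q k - F 0 k)) (at q)"
proof -
  have w: "q - p \<noteq> 0" using assms by simp
  have "(seg_length has_derivative (\<lambda>c. Fv q (q - p) (snd c) - Fv p (q - p) (fst c)))
      (at ((\<lambda>q. (p, q)) q))"
    using first_variation assms by simp
  from has_derivative_compose[OF has_derivative_Pair[OF has_derivative_const has_derivative_ident] this]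
  have "((\<lambda>q. seg_length (p, q)) has_derivative (\<lambda>k. Fv q (q - p) k)) (at q)"
    using Fv_zero[OF w] by simp
  moreover have "(F 0 has_derivative Fv 0 (q - p)) (at ((\<lambda>q. q - p) q))"
    using has_derivative_F_vertical[OF w] by simp
  from has_derivative_compose[OF has_derivative_diff[OF has_derivative_ident has_derivative_const] this]
  have "((\<lambda>q. F 0 (q - p)) has_derivative Fv 0 (q - p)) (at q)" by simp
  ultimately have "((\<lambda>q. seg_length (p, q) - F 0 (q - p)) has_derivative
      (\<lambda>k. Fv q (q - p) k - Fv 0 (q - p) k)) (at q)"
    by (rule has_derivative_diff)
  then show ?thesis using F_diff_eq_Fv_diff[OF w, of q _ 0] by simp
qed

lemma exists_primitive: "\<exists>f. \<forall>q. (f has_derivative (\<lambda>k. F q k - F 0 k)) (at q)"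
proof -
  txt \<open>g p is a primitive away from p; for the base points 0 and e the primitives differ by a
    constant on the connected set V, which allows patching them at 0.\<close>
  define e :: "real^2" where "e = axis 1 1"
  have "e \<noteq> 0" by (simp add: e_def)
  have "(- e) $ 1 \<noteq> e $ 1" by (simp add: e_def axis_def)
  then have "- e \<noteq> e" by metis
  define g where "g p q = seg_length (p, q) - F 0 (q - p)" for p q
  have g: "(g p has_derivative (\<lambda>k. F q k - F 0 k)) (at q)" if "q \<noteq> p" for p q
    unfolding g_def using has_derivative_seg_length_primitive that by simp
  define V where "V = - {0, e}"
  have "open V" "connected V"
    using path_connected_complement_countable[of "{0, e}"]
    by (simp_all add: V_def open_Compl path_connected_imp_connected)
  define c where "c = g 0 (- e) - g e (- e)"
  have const: "g 0 q = g e q + c" if "q \<in> V" for q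
  proof -
    have "g 0 q - g e q = g 0 (- e) - g e (- e)"
    proof (rule has_derivative_zero_unique_connected[OF \<open>open V\<close> \<open>connected V\<close>])
      fix u assume "u \<in> V"
      then show "((\<lambda>q. g 0 q - g e q) has_derivative (\<lambda>h. 0)) (at u)"
        using has_derivative_diff[OF g g, of u 0 e] by (simp add: V_def)
    qed (use that \<open>e \<noteq> 0\<close> \<open>- e \<noteq> e\<close> in \<open>auto simp: V_def\<close>)
    then show ?thesis by (simp add: c_def)
  qed
  define f where "f q = (if q = 0 then g e q + c else g 0 q)" for q
  have "(f has_derivative (\<lambda>k. F q k - F 0 k)) (at q)" for q
  proof (cases "q = 0")
    case False
    show ?thesis
      by (rule has_derivative_transform_within_open[OF g[OF False], where s = "- {0}"])
        (auto simp: f_def False)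
  next
    case True
    have "((\<lambda>q. g e q + c) has_derivative (\<lambda>k. F q k - F 0 k)) (at q)"
      using g[of q e] True \<open>e \<noteq> 0\<close> by (auto intro: has_derivative_add_const)
    then show ?thesis
      by (rule has_derivative_transform_within_open[where s = "- {e}"])
        (use True \<open>e \<noteq> 0\<close> const in \<open>auto simp: f_def V_def\<close>)
  qed
  then show ?thesis by blast
qed

end

theorem theorem3p3:
  fixes F :: "real^2 \<Rightarrow> real^2 \<Rightarrow> real"
  assumes "finsler_C2 F" and "projective F" and "periodic F"
  shows "\<exists>N f. minkowski_norm N \<and> Ck 3 UNIV f \<and>
           (\<forall>x v. F x v = N v + frechet_derivative f (at x) v)"
proof -
  interpret periodic_projective_finsler F
    using assms by unfold_locales
  obtain f where f: "\<And>q. (f has_derivative (\<lambda>k. F q k - F 0 k)) (at q)"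
    using exists_primitive by blast
  have "Ck 2 UNIV (\<lambda>x. F x b - F 0 b)" if "b \<in> Basis" for b :: "real^2"
    using Ck_add[OF open_UNIV Ck2_F_horizontal Ck_const[OF open_UNIV, of 2 "- F 0 b"]]
      nonzero_Basis[OF that] by simp
  then have "Ck (Suc 2) UNIV f"
    by (rule Ck_SucI[OF open_UNIV f])
  then have "Ck 3 UNIV f"
    by (simp only: numeral_3_eq_3 numeral_2_eq_2)
  moreover have "F x v = F 0 v + frechet_derivative f (at x) v" for x v
    using frechet_derivative_at[OF f, symmetric] by simp
  ultimately show ?thesis
    using minkowski_norm_F by blast
qed

end
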